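(* Let $M$ be a compact codimension $0$ submanifold of $\mathbb{R}^d$ with $C^{1,1}$ boundary and positive reach $\tau=\tau(M)>0$, and let $S\subset M$ be a finite $\epsilon/2$-dense subset of $M$ with $\epsilon<\tau/2$. Then for any $r$ with $\epsilon\le r<\tau/2$, the union $\bigcup_{x\in S}B(x,r)$ deformation retracts onto $M$.
   Context: $M$ has $C^{1,1}$ boundary if each boundary point $x_0$ has a neighborhood $U$ in which, in suitable coordinates, $U\cap M=\{x\in U: x_1\ge f(x_2,\ldots,x_d)\}$ with $f$ of class $C^1$ and $\nabla f$ Lipschitz. $B(x,r)$ is the closed Euclidean ball. $S$ is $\delta$-dense in $M$ if $B(p,\delta)\cap S\ne\emptyset$ for all $p\in M$. The reach of a closed set $M$ is $\sup\{\rho\ge0:\ \text{every point at distance}\le\rho \text{ from } M \text{ has a unique nearest point in } M\}$. "$X$ deformation retracts onto $Y$" means the identity of $X$ is homotopic, relative to $Y\subset X$, to a retraction onto $Y$. *)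

theory Defs
  imports "HOL-Analysis.Analysis" "HOL-Library.Extended_Real"
begin

text \<open>C^{1,1} boundary of a (codimension 0) subset of Euclidean space: every
boundary point x0 has an open neighbourhood U in which, in suitable
(rigid, orthonormal) coordinates with first axis the unit vector n,
U \<inter> M = {x \<in> U. x \<bullet> n \<ge> f(remaining coordinates)}, where f is C^1 with
Lipschitz gradient. The dependence of f only on the remaining coordinates is
expressed by invariance of f along n; the translation part of the coordinate
change is absorbed into f.\<close>
definition has_C11_boundary :: "'a::euclidean_space set \<Rightarrow> bool" where
  "has_C11_boundary M \<longleftrightarrow>
     (\<forall>x0 \<in> frontier M. \<exists>U n f g L.
        open U \<and> x0 \<in> U \<and> norm n = 1 \<and>
        (\<forall>x t. f (x + t *\<^sub>R n) = f x) \<and>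
        (\<forall>x \<in> U. (f has_derivative (\<lambda>h. g x \<bullet> h)) (at x)) \<and>
        (\<forall>x \<in> U. \<forall>y \<in> U. norm (g x - g y) \<le> L * norm (x - y)) \<and>
        U \<inter> M = {x \<in> U. x \<bullet> n \<ge> f x})"

definition compact_C11_domain :: "'a::euclidean_space set \<Rightarrow> bool" where
  "compact_C11_domain M \<longleftrightarrow> compact M \<and> has_C11_boundary M"

definition reach :: "'a::euclidean_space set \<Rightarrow> ereal" where
  "reach M = Sup {ereal \<rho> | \<rho>. \<rho> \<ge> 0 \<and>
      (\<forall>x. infdist x M \<le> \<rho> \<longrightarrow> (\<exists>!p. p \<in> M \<and> dist x p = infdist x M))}"

definition dense_in :: "real \<Rightarrow> 'a::euclidean_space set \<Rightarrow> 'a set \<Rightarrow> bool" where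
  "dense_in \<delta> S M \<longleftrightarrow> (\<forall>p \<in> M. cball p \<delta> \<inter> S \<noteq> {})"

definition deformation_retracts_onto :: "'a::euclidean_space set \<Rightarrow> 'a set \<Rightarrow> bool" where
  "deformation_retracts_onto X Y \<longleftrightarrow>
     (\<exists>r. retraction X Y r \<and>
          homotopic_with_canon (\<lambda>h. \<forall>y \<in> Y. h y = y) X X id r)"

end

(* The straight-line homotopy from the identity to the metric projection onto M does the job;
   the projection is defined and continuous on every neighbourhood of M of radius below the
   reach, so the point is that the segment from y to its projection p stays in the union of
   balls. If y is within r - eps/2 of M, the sample point eps/2-close to p covers the segment.
   Otherwise y = p + d u with d > r/2. By Federer's argument, a maximiser of the distance to M
   on a small ball around a point of a distance-minimising normal ray lies further out on the
   same ray, so the normal ray from p minimises distance up to length 2r < reach. Hence the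
   sample point x with |x - y| <= r avoids the open ball of radius 2r about p + 2r u, and since
   m |-> |x - (p + m u)|^2 is a monic quadratic this forces |x - (p + m u)| <= r for 0 <= m <= d. *)

theory Submission
  imports Defs
begin

(* Junk outside the region where the nearest point is unique. *)
definition nearest_point :: "'a::euclidean_space set \<Rightarrow> 'a \<Rightarrow> 'a" where
  "nearest_point M y = (THE p. p \<in> M \<and> dist y p = infdist y M)"

lemma nearest_point_self: "p \<in> M \<Longrightarrow> nearest_point M p = p"
  unfolding nearest_point_def by (rule the_equality) auto

lemma norm_add_scaleR_squared:
  fixes a e :: "'a::real_inner"
  shows "(norm (a + t *\<^sub>R e))\<^sup>2 = (norm a)\<^sup>2 + 2 * t * (e \<bullet> a) + t\<^sup>2 * (norm e)\<^sup>2"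
  unfolding power2_norm_eq_inner
  by (simp add: inner_add_left inner_add_right inner_commute power2_eq_square algebra_simps)

lemma infdist_segment_to_nearest:
  fixes p y :: "'a::real_normed_vector"
  assumes "p \<in> M" "dist y p = infdist y M" "0 \<le> l" "l \<le> 1"
  shows "infdist (p + l *\<^sub>R (y - p)) M = l * dist y p"
proof -
  define z where "z = p + l *\<^sub>R (y - p)"
  have "dist y z = (1 - l) * dist y p"
  proof -
    have "y - z = (1 - l) *\<^sub>R (y - p)" by (simp add: z_def algebra_simps)
    then show ?thesis using assms(4) by (simp add: dist_norm)
  qed
  then have "l * dist y p \<le> infdist z M"
    using infdist_triangle[of y M z] assms(2) by (simp add: algebra_simps)
  moreover have "infdist z M \<le> l * dist y p"
    using infdist_le[OF assms(1), of z] assms(3) by (simp add: z_def dist_norm norm_minus_commute)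
  ultimately show ?thesis by (simp add: z_def)
qed

lemma eventually_at_right_in_cball_interior:
  fixes c w e :: "'a::real_normed_vector"
  assumes "dist c w < s"
  shows "\<forall>\<^sub>F th in at_right 0. w + th *\<^sub>R e \<in> cball c s"
proof -
  have "((\<lambda>th. dist c (w + th *\<^sub>R e)) \<longlongrightarrow> dist c (w + 0 *\<^sub>R e)) (at_right 0)"
    by (intro tendsto_intros)
  then show ?thesis
    using order_tendstoD(2)[of _ "dist c w"] assms by (fastforce elim: eventually_mono)
qed

lemma eventually_at_right_in_cball_inward:
  fixes c w e :: "'a::real_inner"
  assumes "dist c w \<le> s" "e \<bullet> (w - c) < 0"
  shows "\<forall>\<^sub>F th in at_right 0. w + th *\<^sub>R e \<in> cball c s"
  unfolding eventually_at_right_field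
proof (intro exI conjI allI impI)
  have "e \<noteq> 0" using assms(2) by auto
  then show "0 < - 2 * (e \<bullet> (w - c)) / (norm e)\<^sup>2" using assms(2) by (simp add: divide_neg_pos)
  fix th :: real assume "0 < th" "th < - 2 * (e \<bullet> (w - c)) / (norm e)\<^sup>2"
  then have "2 * (e \<bullet> (w - c)) + th * (norm e)\<^sup>2 < 0"
    using \<open>e \<noteq> 0\<close> by (simp add: field_simps)
  then have "th * (2 * (e \<bullet> (w - c)) + th * (norm e)\<^sup>2) < 0"
    by (rule mult_pos_neg[OF \<open>0 < th\<close>])
  then have "(norm (w - c + th *\<^sub>R e))\<^sup>2 \<le> s\<^sup>2"
    using norm_add_scaleR_squared[of "w - c" th e] assms(1) power_mono[of "dist c w" s 2]
    by (simp add: dist_norm norm_minus_commute power2_eq_square algebra_simps)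
  then have "norm (w - c + th *\<^sub>R e) \<le> s"
    using assms(1) zero_le_dist[of c w] by (simp add: power2_le_iff_abs_le)
  then show "w + th *\<^sub>R e \<in> cball c s" by (simp add: dist_norm norm_minus_commute algebra_simps)
qed

lemma nonneg_multiple_if_positive_halfspace_subset:
  fixes v b :: "'a::real_inner"
  assumes "v \<noteq> 0" and halfspace: "\<And>e. e \<bullet> v > 0 \<Longrightarrow> e \<bullet> b \<ge> 0"
  shows "\<exists>k\<ge>0. b = k *\<^sub>R v"
proof -
  define k where "k = (b \<bullet> v) / (v \<bullet> v)"
  define q where "q = b - k *\<^sub>R v"
  have vv: "0 < v \<bullet> v" using assms(1) by simp
  have "q \<bullet> v = 0" using vv by (simp add: q_def k_def inner_diff_left)
  have "k \<ge> 0" using halfspace[of v] vv by (simp add: k_def inner_commute)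
  moreover have "q = 0"
  proof (rule ccontr)
    assume "q \<noteq> 0"
    define e where "e = v - ((k * (v \<bullet> v) + 1) / (q \<bullet> q)) *\<^sub>R q"
    have "e \<bullet> v = v \<bullet> v" using \<open>q \<bullet> v = 0\<close> by (simp add: e_def inner_diff_left)
    moreover have "e \<bullet> b = -1"
    proof -
      have "e \<bullet> q = v \<bullet> q - ((k * (v \<bullet> v) + 1) / (q \<bullet> q)) * (q \<bullet> q)"
        unfolding e_def inner_diff_left inner_scaleR_left ..
      also have "\<dots> = - (k * (v \<bullet> v) + 1)"
        using \<open>q \<noteq> 0\<close> \<open>q \<bullet> v = 0\<close> by (simp add: inner_commute)
      finally have "e \<bullet> q = - (k * (v \<bullet> v) + 1)" .
      moreover have "b = k *\<^sub>R v + q" by (simp add: q_def)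
      ultimately show ?thesis
        using \<open>e \<bullet> v = v \<bullet> v\<close> by (simp add: inner_add_right)
    qed
    ultimately show False using halfspace[of e] vv by simp
  qed
  ultimately show ?thesis by (auto simp: q_def)
qed

lemma deformation_retracts_onto_straight_line:
  fixes f :: "'a::euclidean_space \<Rightarrow> 'a"
  assumes "Y \<subseteq> X" "continuous_on X f" "f \<in> X \<rightarrow> Y" "\<And>y. y \<in> Y \<Longrightarrow> f y = y"
    and segment: "\<And>x. x \<in> X \<Longrightarrow> closed_segment x (f x) \<subseteq> X"
  shows "deformation_retracts_onto X Y"
proof -
  define H where "H = (\<lambda>z. (1 - fst z) *\<^sub>R snd z + fst z *\<^sub>R f (snd z))"
  have "continuous_on ({0..1} \<times> X) H"
    unfolding H_def by (intro continuous_intros continuous_on_compose2[OF assms(2)]) auto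
  moreover have "H \<in> ({0..1} \<times> X) \<rightarrow> X"
    using segment by (force simp: H_def closed_segment_def)
  ultimately have "continuous_map (prod_topology (top_of_set {0..1}) (top_of_set X)) (top_of_set X) H"
    by (simp add: prod_topology_subtopology subtopology_subtopology Times_Int_Times
        euclidean_product_topology continuous_map_subtopology_eu image_subset_iff_funcset)
  then have "homotopic_with_canon (\<lambda>h. \<forall>y \<in> Y. h y = y) X X id f"
    unfolding homotopic_with_def using assms(4) by (intro exI[of _ H]) (auto simp: H_def)
  moreover have "retraction X Y f" using assms(1-4) by (simp add: retraction_def)
  ultimately show ?thesis unfolding deformation_retracts_onto_def by blast
qed

lemma dense_inD: "dense_in \<delta> S M \<Longrightarrow> p \<in> M \<Longrightarrow> \<exists>s\<in>S. dist p s \<le> \<delta>"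
  unfolding dense_in_def by fastforce

lemma quadratic_le_sq_on_segment:
  fixes A B r d m :: real
  assumes far: "(2 * r)\<^sup>2 \<le> A - 2 * (2 * r) * B + (2 * r)\<^sup>2" and near: "A - 2 * d * B + d\<^sup>2 \<le> r\<^sup>2"
    and "0 < d" "d \<le> r" "r < 2 * d" "0 \<le> m" "m \<le> d"
  shows "A - 2 * m * B + m\<^sup>2 \<le> r\<^sup>2"
proof -
  have "A * (2 * r - d) \<le> 2 * r * (r\<^sup>2 - d\<^sup>2)"
  proof -
    have "4 * r * d * B \<le> d * A" using mult_left_mono[OF far, of d] assms(3) by (simp add: algebra_simps)
    moreover have "2 * r * (A - 2 * d * B + d\<^sup>2) \<le> 2 * r * r\<^sup>2"
      using mult_left_mono[OF near, of "2 * r"] assms(3,4) by simp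
    ultimately show ?thesis by (simp add: algebra_simps power2_eq_square)
  qed
  have A: "A \<le> r\<^sup>2"
  proof (rule ccontr)
    assume "\<not> A \<le> r\<^sup>2"
    then have "r\<^sup>2 * (2 * r - d) < 2 * r * (r\<^sup>2 - d\<^sup>2)"
      using \<open>A * (2 * r - d) \<le> _\<close> mult_strict_right_mono[of "r\<^sup>2" A "2 * r - d"] assms(4,5) by linarith
    then have "(r * d) * (2 * d) < (r * d) * r" by (simp add: algebra_simps power2_eq_square)
    then show False using assms(3-5) by (simp add: mult_less_cancel_left_pos)
  qed
  define k where "k = m / d"
  have k: "0 \<le> k" "k \<le> 1" "m = k * d" using assms(3,6,7) by (auto simp: k_def field_simps)
  have "k\<^sup>2 * d\<^sup>2 \<le> k * d\<^sup>2"
    using k by (intro mult_right_mono) (auto simp: power2_eq_square mult_left_le_one_le)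
  then have "A - 2 * m * B + m\<^sup>2 \<le> (1 - k) * A + k * (A - 2 * d * B + d\<^sup>2)"
    using k by (simp add: algebra_simps power2_eq_square)
  also have "\<dots> \<le> (1 - k) * r\<^sup>2 + k * r\<^sup>2"
    using k A near by (intro add_mono mult_left_mono) auto
  finally show ?thesis by (simp add: algebra_simps)
qed

locale unique_nearest_points =
  fixes M :: "'a::euclidean_space set" and \<rho> :: real
  assumes compact: "compact M"
    and unique_nearest: "\<And>y. infdist y M \<le> \<rho> \<Longrightarrow> \<exists>!p. p \<in> M \<and> dist y p = infdist y M"
begin

lemma
  assumes "infdist y M \<le> \<rho>"
  shows nearest_point_in: "nearest_point M y \<in> M"
    and dist_nearest_point: "dist y (nearest_point M y) = infdist y M"
  using theI'[OF unique_nearest[OF assms]] by (simp_all add: nearest_point_def)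

lemma nearest_point_eq:
  assumes "infdist y M \<le> \<rho>" "p \<in> M" "dist y p = infdist y M"
  shows "nearest_point M y = p"
  using unique_nearest[OF assms(1)] nearest_point_in[OF assms(1)] dist_nearest_point[OF assms(1)] assms(2,3)
  by blast

lemma continuous_on_nearest_point: "continuous_on {y. infdist y M \<le> \<rho>} (nearest_point M)"
proof -
  let ?N = "{y. infdist y M \<le> \<rho>}"
  have "(\<lambda>y. (y, nearest_point M y)) ` ?N =
      {z. infdist (fst z) M \<le> \<rho>} \<inter> (UNIV \<times> M) \<inter> {z. dist (fst z) (snd z) = infdist (fst z) M}"
    (is "_ = ?G")
  proof (intro set_eqI iffI)
    fix z assume "z \<in> (\<lambda>y. (y, nearest_point M y)) ` ?N"
    then show "z \<in> ?G" using nearest_point_in dist_nearest_point by auto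
  next
    fix z assume "z \<in> ?G"
    then have "z = (fst z, nearest_point M (fst z))" "fst z \<in> ?N"
      using nearest_point_eq[of "fst z" "snd z"] by auto
    then show "z \<in> (\<lambda>y. (y, nearest_point M y)) ` ?N" by blast
  qed
  also have "closed \<dots>"
    by (intro closed_Int closed_Times closed_Collect_le closed_Collect_eq continuous_intros)
      (auto simp: compact_imp_closed compact)
  finally show ?thesis
    by (rule continuous_from_closed_graph[OF compact, rotated]) (use nearest_point_in in auto)
qed

lemma eventually_infdist_increasing:
  assumes "infdist w M < \<rho>" "e \<bullet> (w - nearest_point M w) > 0"
  shows "\<forall>\<^sub>F th in at_right 0. infdist w M < infdist (w + th *\<^sub>R e) M"
proof -
  have "((\<lambda>th. w + th *\<^sub>R e) \<longlongrightarrow> w + 0 *\<^sub>R e) (at_right 0)"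
    by (intro tendsto_intros)
  then have to_w: "((\<lambda>th. w + th *\<^sub>R e) \<longlongrightarrow> w) (at_right 0)" by simp
  have near: "\<forall>\<^sub>F th in at_right 0. infdist (w + th *\<^sub>R e) M < \<rho>"
    using order_tendstoD(2)[OF tendsto_infdist[OF to_w] assms(1)] .
  moreover have "\<forall>\<^sub>F th in at_right 0. e \<bullet> (w - nearest_point M (w + th *\<^sub>R e)) > 0"
  proof -
    have "((\<lambda>th. nearest_point M (w + th *\<^sub>R e)) \<longlongrightarrow> nearest_point M w) (at_right 0)"
      using near assms(1)
      by (intro continuous_on_tendsto_compose[OF continuous_on_nearest_point to_w])
        (auto elim: eventually_mono)
    then show ?thesis
      using order_tendstoD(1)[OF _ assms(2)] by (blast intro: tendsto_intros)
  qed
  moreover have "\<forall>\<^sub>F th in at_right (0::real). 0 < th" by (rule eventually_at_right_less)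
  ultimately show ?thesis
  proof eventually_elim
    case (elim th)
    define b where "b = nearest_point M (w + th *\<^sub>R e)"
    have "b \<in> M" "dist (w + th *\<^sub>R e) b = infdist (w + th *\<^sub>R e) M"
      using nearest_point_in dist_nearest_point elim by (auto simp: b_def)
    have "(infdist w M)\<^sup>2 \<le> (norm (w - b))\<^sup>2"
      using infdist_le[OF \<open>b \<in> M\<close>, of w] by (simp add: dist_norm infdist_nonneg power_mono)
    also have "\<dots> < (norm (w - b + th *\<^sub>R e))\<^sup>2"
    proof -
      have "0 < th * (e \<bullet> (w - b))" using elim by (simp add: b_def)
      moreover have "0 \<le> th\<^sup>2 * (norm e)\<^sup>2" by simp
      ultimately show ?thesis using norm_add_scaleR_squared[of "w - b" th e] by linarith
    qed
    finally have "(infdist w M)\<^sup>2 < (infdist (w + th *\<^sub>R e) M)\<^sup>2"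
      using \<open>dist (w + th *\<^sub>R e) b = _\<close> by (simp add: dist_norm algebra_simps)
    then show ?case by (rule power_less_imp_less_base) (rule infdist_nonneg)
  qed
qed

lemma infdist_maximizer_on_cball:
  assumes "w \<in> cball c s" and max: "\<And>z. z \<in> cball c s \<Longrightarrow> infdist z M \<le> infdist w M"
    and "0 < infdist w M" "infdist w M < \<rho>"
  shows "w - c = (s / infdist w M) *\<^sub>R (w - nearest_point M w)"
proof -
  define v where "v = w - nearest_point M w"
  have norm_v: "norm v = infdist w M"
    using dist_nearest_point assms(4) by (simp add: v_def dist_norm)
  then have "v \<noteq> 0" using assms(3) by auto
  \<comment> \<open>otherwise moving from w along e would beat the maximum\<close>
  have escapes: "\<not> (\<forall>\<^sub>F th in at_right 0. w + th *\<^sub>R e \<in> cball c s)" if "e \<bullet> v > 0" for e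
  proof
    assume "\<forall>\<^sub>F th in at_right 0. w + th *\<^sub>R e \<in> cball c s"
    moreover have "\<forall>\<^sub>F th in at_right 0. infdist w M < infdist (w + th *\<^sub>R e) M"
      using eventually_infdist_increasing[OF assms(4)] that by (simp add: v_def)
    ultimately have "\<forall>\<^sub>F th in at_right (0::real). False"
      by eventually_elim (use max in fastforce)
    then show False by (simp add: trivial_limit_at_right_real)
  qed
  have on_sphere: "dist c w = s"
    using escapes[of v] eventually_at_right_in_cball_interior[of c w s v] assms(1) \<open>v \<noteq> 0\<close>
    by force
  have "e \<bullet> (w - c) \<ge> 0" if "e \<bullet> v > 0" for e
    using escapes[OF that] eventually_at_right_in_cball_inward[of c w s e] on_sphere by force
  then obtain k where "k \<ge> 0" and k: "w - c = k *\<^sub>R v"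
    using nonneg_multiple_if_positive_halfspace_subset[OF \<open>v \<noteq> 0\<close>] by blast
  moreover have "norm (w - c) = s" using on_sphere by (simp add: dist_norm norm_minus_commute)
  ultimately have "k * infdist w M = s" using norm_v by simp
  then have "k = s / infdist w M" using assms(3) by (simp add: field_simps)
  then show ?thesis using k by (simp add: v_def)
qed

(* The maximiser w of the distance to M on cball c s sees c on the segment towards its nearest
   point b; by uniqueness of the nearest point of c, b = a, so w lies on the ray from a. *)
lemma infdist_normal_ray_step:
  assumes "a \<in> M" "norm u = 1" "0 < s" "s \<le> t" "t + s < \<rho>"
    and "infdist (a + t *\<^sub>R u) M = t"
  shows "infdist (a + (t + s) *\<^sub>R u) M = t + s"
proof -
  define c where "c = a + t *\<^sub>R u"
  obtain w where "w \<in> cball c s" and max: "\<And>z. z \<in> cball c s \<Longrightarrow> infdist z M \<le> infdist w M"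
    using continuous_attains_sup[OF compact_cball _ continuous_on_infdist[OF continuous_on_id], of c s M]
      assms(3) by auto
  define D where "D = infdist w M"
  define b where "b = nearest_point M w"
  have "t \<le> D" using max[of c] assms(3,6) by (simp add: D_def c_def)
  moreover have "D \<le> t + s"
    using infdist_triangle[of w M c] \<open>w \<in> cball c s\<close> assms(6) by (simp add: D_def c_def dist_commute)
  ultimately have D: "0 < D" "D < \<rho>" "s \<le> D" using assms(3-5) by linarith+
  have b: "b \<in> M" "dist w b = infdist w M"
    using nearest_point_in dist_nearest_point D(2) by (auto simp: b_def D_def)
  have w_c: "w - c = (s / D) *\<^sub>R (w - b)"
    using infdist_maximizer_on_cball[OF \<open>w \<in> cball c s\<close> max] D by (simp add: D_def b_def)
  define l where "l = 1 - s / D"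
  have l: "0 \<le> l" "l \<le> 1" using D assms(3) by (auto simp: l_def field_simps)
  have c_segment: "c = b + l *\<^sub>R (w - b)" using w_c by (simp add: l_def algebra_simps)
  then have "infdist c M = l * D"
    using infdist_segment_to_nearest[OF b l] b(2) by (simp add: D_def)
  then have "t = l * D" using assms(6) by (simp add: c_def)
  have c_near: "infdist c M \<le> \<rho>" using assms(3,5,6) by (simp add: c_def)
  have "dist c b = infdist c M"
    using c_segment b(2) l(1) \<open>infdist c M = l * D\<close> by (simp add: dist_norm D_def)
  then have "nearest_point M c = b" by (rule nearest_point_eq[OF c_near b(1)])
  moreover have "nearest_point M c = a"
    using nearest_point_eq[OF c_near assms(1)] assms(2,3,4,6) by (simp add: c_def dist_norm)
  ultimately have "b = a" by simp
  have "0 < l" using \<open>t = l * D\<close> assms(3,4) D(1) by (metis zero_less_mult_pos2 order_less_le_trans)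
  have "l *\<^sub>R (w - a) = l *\<^sub>R (D *\<^sub>R u)"
    using w_c \<open>b = a\<close> \<open>t = l * D\<close> D(1) by (simp add: c_def l_def algebra_simps)
  then have "w - a = D *\<^sub>R u" using \<open>0 < l\<close> by (simp only: scaleR_cancel_left) simp
  then have "w = a + D *\<^sub>R u" by (simp add: diff_eq_eq add.commute)
  moreover have "D = t + s" using \<open>t = l * D\<close> D(1) by (simp add: l_def algebra_simps)
  ultimately show ?thesis by (simp add: D_def)
qed

lemma infdist_normal_ray:
  assumes "a \<in> M" "norm u = 1" "0 < d" "infdist (a + d *\<^sub>R u) M = d" "d \<le> R" "R < \<rho>"
  shows "infdist (a + R *\<^sub>R u) M = R"
proof -
  \<comment> \<open>the step lemma needs \<open>s \<le> t\<close>, so each step at most doubles the length\<close>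
  have "infdist (a + R *\<^sub>R u) M = R" if "d \<le> R" "R < \<rho>" "R \<le> 2 ^ k * d" for k :: nat and R
    using that
  proof (induction k arbitrary: R)
    case 0
    then show ?case using assms(4) by simp
  next
    case (Suc k)
    show ?case
    proof (cases "R = d")
      case True
      then show ?thesis using assms(4) by simp
    next
      case False
      define t where "t = max d (R / 2)"
      have "d \<le> 2 ^ k * d" using assms(3) by simp
      then have "infdist (a + t *\<^sub>R u) M = t"
        using Suc assms(3) by (intro Suc.IH) (auto simp: t_def)
      moreover have "0 < R - t" "R - t \<le> t" "t + (R - t) < \<rho>"
        using Suc.prems False assms(3) by (auto simp: t_def)
      ultimately show ?thesis
        using infdist_normal_ray_step[OF assms(1,2), of "R - t" t] by simp
    qed
  qed
  moreover obtain k :: nat where "R / d < 2 ^ k" using real_arch_pow[of 2 "R / d"] by auto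
  then have "R \<le> 2 ^ k * d" using assms(3) by (simp add: field_simps)
  ultimately show ?thesis using assms(5,6) by blast
qed

lemma normal_segment_in_cball:
  assumes "x \<in> M" "p \<in> M" "norm u = 1" "0 < d" "infdist (p + d *\<^sub>R u) M = d"
    and "dist x (p + d *\<^sub>R u) \<le> r" "r < 2 * d" "2 * r < \<rho>" "0 \<le> m" "m \<le> d"
  shows "dist x (p + m *\<^sub>R u) \<le> r"
proof -
  have "d \<le> r"
    using infdist_le[OF assms(1), of "p + d *\<^sub>R u"] assms(5,6) by (simp add: dist_commute)
  then have "infdist (p + (2 * r) *\<^sub>R u) M = 2 * r"
    using infdist_normal_ray[OF assms(2-5)] assms(4,8) by simp
  then have far: "2 * r \<le> dist x (p + (2 * r) *\<^sub>R u)"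
    using infdist_le[OF assms(1)] by (metis dist_commute)
  define P where "P = x - p"
  have dist_sq: "(dist x (p + t *\<^sub>R u))\<^sup>2 = (norm P)\<^sup>2 - 2 * t * (u \<bullet> P) + t\<^sup>2" for t
    using norm_add_scaleR_squared[of P "- t" u] assms(3) by (simp add: P_def dist_norm algebra_simps)
  have "(dist x (p + m *\<^sub>R u))\<^sup>2 \<le> r\<^sup>2"
    unfolding dist_sq
  proof (rule quadratic_le_sq_on_segment)
    have "(2 * r)\<^sup>2 \<le> (dist x (p + (2 * r) *\<^sub>R u))\<^sup>2"
      using far assms(4) \<open>d \<le> r\<close> by (intro power_mono) auto
    then show "(2 * r)\<^sup>2 \<le> (norm P)\<^sup>2 - 2 * (2 * r) * (u \<bullet> P) + (2 * r)\<^sup>2"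
      by (simp only: dist_sq)
    have "(dist x (p + d *\<^sub>R u))\<^sup>2 \<le> r\<^sup>2" using assms(6) by (intro power_mono) auto
    then show "(norm P)\<^sup>2 - 2 * d * (u \<bullet> P) + d\<^sup>2 \<le> r\<^sup>2" by (simp only: dist_sq)
  qed (use assms \<open>d \<le> r\<close> in auto)
  then show ?thesis using assms(4) \<open>d \<le> r\<close> by (simp add: power2_le_iff_abs_le)
qed

lemma segment_to_nearest_point_in_union_cballs:
  assumes "S \<subseteq> M" "dense_in (\<epsilon> / 2) S M" "\<epsilon> \<le> r" "2 * r < \<rho>" "x \<in> S" "dist x y \<le> r"
  shows "closed_segment y (nearest_point M y) \<subseteq> (\<Union>s\<in>S. cball s r)"
proof
  fix z assume "z \<in> closed_segment y (nearest_point M y)"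
  define p where "p = nearest_point M y"
  define d where "d = infdist y M"
  obtain l where l: "0 \<le> l" "l \<le> 1" "z = p + l *\<^sub>R (y - p)"
    using \<open>z \<in> _\<close> closed_segment_commute[of y] by (auto simp: in_segment p_def algebra_simps)
  have "x \<in> M" using assms(1,5) by blast
  have "d \<le> r" using infdist_le[OF \<open>x \<in> M\<close>, of y] assms(6) by (simp add: d_def dist_commute)
  moreover have "0 \<le> d" by (simp add: d_def infdist_nonneg)
  ultimately have p: "p \<in> M" "dist y p = d"
    using nearest_point_in dist_nearest_point assms(4) by (auto simp: p_def d_def)
  show "z \<in> (\<Union>s\<in>S. cball s r)"
  proof (cases "d \<le> r - \<epsilon> / 2")
    case True
    obtain s where "s \<in> S" "dist p s \<le> \<epsilon> / 2" using dense_inD[OF assms(2) p(1)] ..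
    moreover have "dist p z \<le> d"
      using l p(2) \<open>0 \<le> d\<close> by (simp add: dist_norm norm_minus_commute mult_left_le_one_le)
    ultimately have "dist s z \<le> r"
      using dist_triangle[of s z p] True by (simp add: dist_commute)
    then show ?thesis using \<open>s \<in> S\<close> by auto
  next
    case False
    then have "r < 2 * d" using assms(3) by simp
    moreover have "0 \<le> r" using assms(6) zero_le_dist[of x y] by linarith
    ultimately have "0 < d" by simp
    define u where "u = (1 / d) *\<^sub>R (y - p)"
    have "norm u = 1" "y = p + d *\<^sub>R u" "z = p + (l * d) *\<^sub>R u"
      using p(2) \<open>0 < d\<close> l(3) by (auto simp: u_def dist_norm)
    then have "dist x z \<le> r"
      using normal_segment_in_cball[OF \<open>x \<in> M\<close> p(1) _ \<open>0 < d\<close>, of u r "l * d"]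
        assms(4,6) \<open>r < 2 * d\<close> l(1,2) \<open>0 < d\<close> by (simp add: d_def mult_left_le_one_le)
    then show ?thesis using assms(5) by auto
  qed
qed

lemma union_cballs_deformation_retracts:
  assumes "S \<subseteq> M" "dense_in (\<epsilon> / 2) S M" "\<epsilon> \<le> r" "2 * r < \<rho>"
  shows "deformation_retracts_onto (\<Union>x\<in>S. cball x r) M"
proof (rule deformation_retracts_onto_straight_line)
  let ?X = "\<Union>x\<in>S. cball x r"
  have near: "infdist y M \<le> \<rho>" if "y \<in> ?X" for y
  proof -
    obtain x where "x \<in> S" "dist x y \<le> r" using \<open>y \<in> ?X\<close> by auto
    then have "infdist y M \<le> r"
      using infdist_le[of x M y] assms(1) by (auto simp: dist_commute)
    then show ?thesis using \<open>dist x y \<le> r\<close> zero_le_dist[of x y] assms(4) by linarith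
  qed
  show "M \<subseteq> ?X"
  proof
    fix p assume "p \<in> M"
    then obtain s where "s \<in> S" "dist p s \<le> \<epsilon> / 2" using dense_inD[OF assms(2)] by blast
    moreover have "dist p s \<le> r"
      using \<open>dist p s \<le> \<epsilon> / 2\<close> zero_le_dist[of p s] assms(3) by linarith
    ultimately show "p \<in> ?X" by (auto simp: dist_commute)
  qed
  show "continuous_on ?X (nearest_point M)"
    by (rule continuous_on_subset[OF continuous_on_nearest_point]) (use near in blast)
  show "nearest_point M \<in> ?X \<rightarrow> M" using nearest_point_in near by auto
  show "\<And>y. y \<in> M \<Longrightarrow> nearest_point M y = y" by (rule nearest_point_self)
  fix y assume "y \<in> ?X"
  then obtain x where "x \<in> S" "dist x y \<le> r" by auto
  then show "closed_segment y (nearest_point M y) \<subseteq> ?X"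
    by (rule segment_to_nearest_point_in_union_cballs[OF assms])
qed

end

lemma unique_nearest_points_below_reach:
  assumes "compact M" "ereal \<rho> < reach M"
  shows "unique_nearest_points M \<rho>"
proof
  show "compact M" by fact
  fix y assume "infdist y M \<le> \<rho>"
  obtain \<rho>' where "\<rho> < \<rho>'" "\<forall>x. infdist x M \<le> \<rho>' \<longrightarrow> (\<exists>!p. p \<in> M \<and> dist x p = infdist x M)"
    using assms(2) unfolding reach_def less_Sup_iff by auto
  then show "\<exists>!p. p \<in> M \<and> dist y p = infdist y M" using \<open>infdist y M \<le> \<rho>\<close> by auto
qed

theorem proposition2p3:
  fixes M S :: "'a::euclidean_space set" and \<epsilon> r :: real
  assumes "compact_C11_domain M"
    and "reach M > 0"
    and "S \<subseteq> M" and "finite S" and "dense_in (\<epsilon> / 2) S M"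
    and "ereal \<epsilon> < reach M / 2"
    and "\<epsilon> \<le> r" and "ereal r < reach M / 2"
  shows "deformation_retracts_onto (\<Union>x\<in>S. cball x r) M"
proof -
  have "ereal (2 * r) < reach M"
    using assms(8) ereal_less_divide_pos[of 2 "ereal r" "reach M"] by simp
  then obtain \<rho> where "ereal (2 * r) < ereal \<rho>" "ereal \<rho> < reach M"
    using ereal_dense2 by blast
  then have "2 * r < \<rho>" "ereal \<rho> < reach M" by simp_all
  moreover have "compact M" using assms(1) by (simp add: compact_C11_domain_def)
  ultimately interpret unique_nearest_points M \<rho>
    by (intro unique_nearest_points_below_reach)
  show ?thesis
    using union_cballs_deformation_retracts[OF assms(3,5,7) \<open>2 * r < \<rho>\<close>] .
qed

end
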